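(* For $n\ge 1$ let $A_n(x)=\sum_{\pi\in S_n}x^{\mathrm{des}(\pi)}$ be the Eulerian polynomial, and let $$C_n(x)=\sum_{\omega\in C_n}x^{\mathrm{des}(\omega)},\qquad \widetilde C_n(x)=\sum_{\omega\in C_n}x^{\mathrm{ades}(\omega)},\qquad T_n(x)=C_n(x^2)+\frac1x\,\widetilde C_n(x^2).$$ Then for every $n\ge1$, $$T_n(x)=(1+x)^{n+1}A_n(x).$$
   Context: $S_n$ is the symmetric group on $[n]$; for $\pi\in S_n$, $\mathrm{des}(\pi)=|\{i\in[n-1]:\pi(i)>\pi(i+1)\}|$. $C_n$ denotes the set of signed permutations of $\pm[n]=\{\pm1,\dots,\pm n\}$, i.e. bijections $\omega$ of $\pm[n]$ with $\omega(-i)=-\omega(i)$ for all $i$; such $\omega$ is recorded by $(\omega(1),\dots,\omega(n))$. Setting $\omega(0)=\omega(n+1)=0$, define $\mathrm{des}(\omega)=|\{i\in\{0,1,\dots,n-1\}:\omega(i)>\omega(i+1)\}|$ and $\mathrm{ades}(\omega)=|\{i\in\{0,1,\dots,n\}:\omega(i)>\omega(i+1)\}|$. *)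

theory Defs
  imports "HOL-Combinatorics.Combinatorics" Complex_Main
begin

definition des :: "nat \<Rightarrow> (nat \<Rightarrow> nat) \<Rightarrow> nat" where
  "des n p = card {i \<in> {1..n-1}. p i > p (Suc i)}"

definition signed_perms :: "nat \<Rightarrow> (int \<Rightarrow> int) set" where
  "signed_perms n = {w. w permutes ({-int n..int n} - {0}) \<and> (\<forall>i. w (-i) = - w i)}"

definition sval :: "nat \<Rightarrow> (int \<Rightarrow> int) \<Rightarrow> nat \<Rightarrow> int" where
  "sval n w i = (if 1 \<le> i \<and> i \<le> n then w (int i) else 0)"

definition sdes :: "nat \<Rightarrow> (int \<Rightarrow> int) \<Rightarrow> nat" where
  "sdes n w = card {i \<in> {0..n-1}. sval n w i > sval n w (Suc i)}"

definition sades :: "nat \<Rightarrow> (int \<Rightarrow> int) \<Rightarrow> nat" where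
  "sades n w = card {i \<in> {0..n}. sval n w i > sval n w (Suc i)}"

definition eulerA :: "nat \<Rightarrow> real \<Rightarrow> real" where
  "eulerA n x = (\<Sum>p | p permutes {1..n}. x ^ des n p)"

definition typeC :: "nat \<Rightarrow> real \<Rightarrow> real" where
  "typeC n x = (\<Sum>w\<in>signed_perms n. x ^ sdes n w)"

definition typeCt :: "nat \<Rightarrow> real \<Rightarrow> real" where
  "typeCt n x = (\<Sum>w\<in>signed_perms n. x ^ sades n w)"

definition Tpoly :: "nat \<Rightarrow> real \<Rightarrow> real" where
  "Tpoly n x = typeC n (x^2) + (1/x) * typeCt n (x^2)"

end

theory Submission
  imports Defs "HOL-Computational_Algebra.Polynomial_FPS"
begin

(* Worpitzky-type identities, proved by inserting the largest letter, state that the weights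
   W n m d = binom(m - d + n, n) satisfy, for every m,
     sum over pi in S_n of W(des pi) = (m+1)^n,
     sum over w in C_n of W(des w) = (2m+1)^n,   sum over w in C_n of W(ades w) = (2m)^n.
   As W n m d is the coefficient of t^m in t^d / (1-t)^(n+1), this says that A_n(t), C_n(t) and
   C~_n(t) are (1-t)^(n+1) times sum (m+1)^n t^m, sum (2m+1)^n t^m and sum (2m)^n t^m.
   Substituting t = x^2, the odd and even parts recombine:
     x C_n(x^2) + C~_n(x^2) = (1-x^2)^(n+1) sum_j j^n x^j = (1-x^2)^(n+1) x A_n(x) / (1-x)^(n+1)
                            = x (1+x)^(n+1) A_n(x),
   and dividing by x gives the theorem. *)

section \<open>Descents of words\<close>

fun descents :: "'a::linorder list \<Rightarrow> nat" where
  "descents (a # b # xs) = (if b < a then 1 else 0) + descents (b # xs)"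
| "descents _ = 0"

lemma descents_le_length: "descents xs \<le> length xs - 1"
  by (induction xs rule: descents.induct) auto

lemma descents_append:
  "descents (xs @ ys) =
     descents xs + descents ys + (if xs \<noteq> [] \<and> ys \<noteq> [] \<and> hd ys < last xs then 1 else 0)"
proof (induction xs rule: descents.induct)
  case ("2_2" a)
  then show ?case by (cases ys) auto
qed auto

lemma descents_eq_card: "descents xs = card {i. i < length xs - 1 \<and> xs ! Suc i < xs ! i}"
proof (induction xs rule: descents.induct)
  case (1 a b xs)
  let ?D = "\<lambda>ys. {i. i < length ys - 1 \<and> ys ! Suc i < ys ! i}"
  have D: "?D (a # b # xs) = (if b < a then insert 0 else id) (Suc ` ?D (b # xs))"
  proof (intro set_eqI iffI)
    fix i assume "i \<in> ?D (a # b # xs)"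
    then show "i \<in> (if b < a then insert 0 else id) (Suc ` ?D (b # xs))"
      by (cases i) auto
  qed (auto split: if_splits)
  have "finite (?D (b # xs))"
    by (rule finite_subset[of _ "{..<length (b # xs)}"]) auto
  then have "card (?D (a # b # xs)) = (if b < a then 1 else 0) + card (?D (b # xs))"
    by (simp only: D) (simp add: card_image)
  then show ?case
    using 1 by (simp only: descents.simps)
qed auto

definition insert_at :: "nat \<Rightarrow> 'a \<Rightarrow> 'a list \<Rightarrow> 'a list" where
  "insert_at k z xs = take k xs @ z # drop k xs"

lemma length_insert_at [simp]: "length (insert_at k z xs) = Suc (length xs)"
  by (simp add: insert_at_def)

lemma set_insert_at [simp]: "set (insert_at k z xs) = insert z (set xs)"
  by (metis insert_at_def append_take_drop_id set_append list.set(2) Un_insert_right)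

lemma map_insert_at: "map f (insert_at k z xs) = insert_at k (f z) (map f xs)"
  by (simp add: insert_at_def take_map drop_map)

lemma distinct_insert_at [simp]: "distinct (insert_at k z xs) \<longleftrightarrow> z \<notin> set xs \<and> distinct xs"
proof -
  have "mset (insert_at k z xs) = mset (z # xs)"
    by (metis insert_at_def append_take_drop_id mset_append mset.simps(2) add_mset_add_single
        union_mset_add_mset_right)
  then show ?thesis
    by (metis distinct.simps(2) mset_eq_imp_distinct_iff)
qed

lemma insert_at_eq_iff:
  assumes "k \<le> length xs" "k \<le> length ys"
  shows "insert_at k y xs = insert_at k z ys \<longleftrightarrow> y = z \<and> xs = ys"
  using assms by (auto simp: insert_at_def append_eq_append_conv) (metis append_take_drop_id)

lemma insert_at_length: "insert_at (length xs) z xs = xs @ [z]"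
  by (simp add: insert_at_def)

lemma in_set_imp_insert_at: "z \<in> set ys \<Longrightarrow> \<exists>xs k. k \<le> length xs \<and> ys = insert_at k z xs"
  by (metis in_set_conv_decomp le_add1 length_append insert_at_def append_eq_conv_conj)

lemma takeWhile_insert_at:
  assumes "set xs \<inter> Z = {}" "z \<in> Z"
  shows "takeWhile (\<lambda>y. y \<notin> Z) (insert_at k z xs) = take k xs"
proof -
  have "\<forall>y\<in>set (take k xs). y \<notin> Z"
    using assms(1) by (auto dest: in_set_takeD)
  then show ?thesis
    using assms(2) by (simp add: insert_at_def takeWhile_append2)
qed

lemma descents_insert_at_Suc:
  assumes "Suc k < length xs" and extreme: "(\<forall>y\<in>set xs. y < z) \<or> (\<forall>y\<in>set xs. z < y)"
  shows "descents (insert_at (Suc k) z xs) = descents xs + (if xs ! Suc k < xs ! k then 0 else 1)"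
proof -
  let ?u = "take (Suc k) xs" and ?v = "drop (Suc k) xs"
  have uv: "?u \<noteq> []" "?v \<noteq> []" "last ?u = xs ! k" "hd ?v = xs ! Suc k"
    using assms(1) by (auto simp: take_Suc_conv_app_nth hd_drop_conv_nth)
  have mem: "xs ! k \<in> set xs" "xs ! Suc k \<in> set xs"
    using assms(1) by auto
  have split_xs: "descents xs = descents ?u + descents ?v + (if hd ?v < last ?u then 1 else 0)"
    using descents_append[of ?u ?v] uv(1,2) by simp
  have split_ins: "descents (insert_at (Suc k) z xs)
      = descents ?u + descents ?v + (if hd ?v < z then 1 else 0) + (if z < last ?u then 1 else 0)"
    using uv by (simp add: insert_at_def descents_append[of ?u "z # ?v"]
        descents_append[of "[z]" ?v, simplified])
  from extreme show ?thesis
  proof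
    assume "\<forall>y\<in>set xs. y < z"
    with mem have "xs ! k < z" "xs ! Suc k < z" "\<not> z < xs ! k"
      by (auto dest: less_not_sym)
    then show ?thesis
      using split_xs split_ins uv by simp
  next
    assume "\<forall>y\<in>set xs. z < y"
    with mem have "z < xs ! k" "\<not> xs ! Suc k < z"
      by (auto dest: less_not_sym)
    then show ?thesis
      using split_xs split_ins uv by simp
  qed
qed

lemma sum_descents_insert_at_Suc:
  assumes "(\<forall>y\<in>set xs. y < z) \<or> (\<forall>y\<in>set xs. z < y)"
  defines "d \<equiv> descents xs"
  shows "(\<Sum>k<length xs - 1. f (descents (insert_at (Suc k) z xs)))
           = d * f d + (length xs - 1 - d) * f (Suc d)"
proof -
  let ?D = "{k. k < length xs - 1 \<and> xs ! Suc k < xs ! k}"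
  have "(\<Sum>k<length xs - 1. f (descents (insert_at (Suc k) z xs)))
      = (\<Sum>k<length xs - 1. if xs ! Suc k < xs ! k then f d else f (Suc d))"
    by (rule sum.cong) (simp_all add: descents_insert_at_Suc[OF _ assms(1)] d_def)
  also have "\<dots> = card ?D * f d + card ({..<length xs - 1} - ?D) * f (Suc d)"
  proof -
    have "{..<length xs - 1} \<inter> {k. xs ! Suc k < xs ! k} = ?D"
         "{..<length xs - 1} \<inter> - {k. xs ! Suc k < xs ! k} = {..<length xs - 1} - ?D"
      by auto
    then show ?thesis
      by (simp only: sum.If_cases finite_lessThan sum_constant) simp
  qed
  also have "card ?D = d"
    by (simp add: d_def descents_eq_card)
  also have "card ({..<length xs - 1} - ?D) = length xs - 1 - d"
    by (subst card_Diff_subset) (auto simp: d_def descents_eq_card)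
  finally show ?thesis .
qed

lemma sum_descents_insert_at_max:
  assumes "\<forall>y\<in>set xs. y < z"
  defines "d \<equiv> descents xs"
  shows "(\<Sum>k\<le>length xs. f (descents (insert_at k z xs)))
           = Suc d * f d + (length xs - d) * f (Suc d)"
proof (cases xs)
  case Nil
  then show ?thesis by (simp add: insert_at_def d_def)
next
  case (Cons y ys)
  have first: "descents (insert_at 0 z xs) = Suc d"
    using assms Cons by (simp add: insert_at_def d_def)
  have "xs \<noteq> []" "last xs < z"
    using assms Cons by simp_all
  then have last: "descents (insert_at (length xs) z xs) = d"
    using descents_append[of xs "[z]"] by (simp add: insert_at_length d_def less_not_sym)
  have shift: "(\<Sum>k\<le>Suc n. g k) = g 0 + (\<Sum>k<n. g (Suc k)) + g (Suc n)" for g :: "nat \<Rightarrow> nat" and n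
    by (metis sum.atMost_Suc_shift lessThan_Suc_atMost sum.lessThan_Suc add.assoc)
  have "(\<Sum>k\<le>length xs. f (descents (insert_at k z xs)))
      = f (Suc d) + (\<Sum>k<length xs - 1. f (descents (insert_at (Suc k) z xs))) + f d"
    using shift[of _ "length xs - 1"] first last Cons by simp
  also have "\<dots> = f (Suc d) + (d * f d + (length xs - 1 - d) * f (Suc d)) + f d"
    using sum_descents_insert_at_Suc[OF disjI1[OF assms(1)], of f] by (simp add: d_def)
  moreover have "length xs - d = Suc (length xs - 1 - d)"
    using descents_le_length[of xs] Cons unfolding d_def by simp
  ultimately show ?thesis
    by simp
qed

lemma abs_less_imp_extreme:
  fixes z :: "'a::linordered_idom"
  assumes "\<forall>y\<in>Y. \<bar>y\<bar> < \<bar>z\<bar>"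
  shows "(\<forall>y\<in>Y. y < z) \<or> (\<forall>y\<in>Y. z < y)"
proof (cases "z < 0")
  case True
  then have "\<forall>y\<in>Y. z < y"
    using assms by (auto simp: abs_less_iff abs_of_neg)
  then show ?thesis ..
next
  case False
  then have "\<forall>y\<in>Y. y < z"
    using assms by (auto simp: abs_less_iff)
  then show ?thesis ..
qed

lemma sum_descents_insert_at_signed:
  fixes z :: "'a::linordered_idom"
  assumes "z \<noteq> 0" "\<forall>y\<in>set xs. \<bar>y\<bar> < \<bar>z\<bar>"
  defines "d \<equiv> descents (0 # xs)"
  shows "(\<Sum>k\<le>length xs. f (descents (0 # insert_at k z xs)))
           = d * f d + (length xs - d) * f (Suc d) + (if z < 0 then f (Suc d) else f d)"
proof -
  have extreme: "(\<forall>y\<in>set (0 # xs). y < z) \<or> (\<forall>y\<in>set (0 # xs). z < y)"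
    using abs_less_imp_extreme[of "set (0 # xs)" z] assms(1,2) by simp
  have "\<bar>last (0 # xs)\<bar> < \<bar>z\<bar>"
    using assms(1,2) by (cases "xs = []") auto
  then have last: "descents (insert_at (Suc (length xs)) z (0 # xs)) = d + (if z < 0 then 1 else 0)"
    using descents_append[of "0 # xs" "[z]"] insert_at_length[of "0 # xs" z] by (auto simp: d_def)
  have "(\<Sum>k\<le>length xs. f (descents (0 # insert_at k z xs)))
      = (\<Sum>k<length xs. f (descents (insert_at (Suc k) z (0 # xs))))
        + f (descents (insert_at (Suc (length xs)) z (0 # xs)))"
    by (simp add: lessThan_Suc_atMost[symmetric] insert_at_def)
  also have "\<dots> = d * f d + (length xs - d) * f (Suc d) + (if z < 0 then f (Suc d) else f d)"
    using sum_descents_insert_at_Suc[OF extreme, of f] last by (simp add: d_def)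
  finally show ?thesis .
qed

lemma sum_descents_insert_at_signed_bracket:
  fixes z :: "'a::linordered_idom"
  assumes "z \<noteq> 0" "\<forall>y\<in>set xs. \<bar>y\<bar> < \<bar>z\<bar>"
  defines "d \<equiv> descents (0 # xs @ [0])"
  shows "(\<Sum>k\<le>length xs. f (descents (0 # insert_at k z xs @ [0])))
           = d * f d + (Suc (length xs) - d) * f (Suc d)"
proof -
  have extreme: "(\<forall>y\<in>set (0 # xs @ [0]). y < z) \<or> (\<forall>y\<in>set (0 # xs @ [0]). z < y)"
    using abs_less_imp_extreme[of "set (0 # xs @ [0])" z] assms(1,2) by simp
  have "0 # insert_at k z xs @ [0] = insert_at (Suc k) z (0 # xs @ [0])" if "k \<le> length xs" for k
    using that by (simp add: insert_at_def)
  then have "(\<Sum>k\<le>length xs. f (descents (0 # insert_at k z xs @ [0])))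
      = (\<Sum>k<length (0 # xs @ [0]) - 1. f (descents (insert_at (Suc k) z (0 # xs @ [0]))))"
    by (simp add: lessThan_Suc_atMost)
  also have "\<dots> = d * f d + (Suc (length xs) - d) * f (Suc d)"
    using sum_descents_insert_at_Suc[OF extreme, of f] by (simp add: d_def)
  finally show ?thesis .
qed

lemma inj_on_insert_at:
  assumes "\<And>xs. xs \<in> L \<Longrightarrow> set xs \<inter> Z = {}"
  shows "inj_on (\<lambda>(xs, k, z). insert_at k z xs) (SIGMA xs:L. {..length xs} \<times> Z)"
proof (rule inj_onI)
  fix p q
  assume "p \<in> (SIGMA xs:L. {..length xs} \<times> Z)" "q \<in> (SIGMA xs:L. {..length xs} \<times> Z)"
    and "(\<lambda>(xs, k, z). insert_at k z xs) p = (\<lambda>(xs, k, z). insert_at k z xs) q"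
  then obtain xs k z ys j y where pq: "p = (xs, k, z)" "q = (ys, j, y)"
    and xs: "xs \<in> L" "k \<le> length xs" "z \<in> Z" and ys: "ys \<in> L" "j \<le> length ys" "y \<in> Z"
    and eq: "insert_at k z xs = insert_at j y ys"
    by (cases p, cases q) auto
  have "take k xs = takeWhile (\<lambda>y. y \<notin> Z) (insert_at k z xs)"
    using takeWhile_insert_at[OF assms[OF xs(1)] xs(3)] by simp
  also have "\<dots> = take j ys"
    using takeWhile_insert_at[OF assms[OF ys(1)] ys(3)] eq by simp
  finally have "k = j"
    using xs(2) ys(2) by (metis length_take min_absorb2)
  then show "p = q"
    using eq xs(2) ys(2) pq by (simp add: insert_at_eq_iff)
qed

lemma sum_image_insert_at:
  assumes "finite L" "finite Z" "\<And>xs. xs \<in> L \<Longrightarrow> set xs \<inter> Z = {}"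
  shows "(\<Sum>ys\<in>(\<lambda>(xs, k, z). insert_at k z xs) ` (SIGMA xs:L. {..length xs} \<times> Z). g ys)
           = (\<Sum>xs\<in>L. \<Sum>k\<le>length xs. \<Sum>z\<in>Z. g (insert_at k z xs))"
proof -
  let ?f = "\<lambda>(xs, k, z). insert_at k z xs"
  have "(\<Sum>ys\<in>?f ` (SIGMA xs:L. {..length xs} \<times> Z). g ys)
      = (\<Sum>(xs, k, z)\<in>(SIGMA xs:L. {..length xs} \<times> Z). g (insert_at k z xs))"
    by (subst sum.reindex[OF inj_on_insert_at[OF assms(3)]]) (auto intro: sum.cong)
  also have "\<dots> = (\<Sum>xs\<in>L. \<Sum>(k, z)\<in>{..length xs} \<times> Z. g (insert_at k z xs))"
    using assms(1,2) by (subst sum.Sigma) auto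
  also have "\<dots> = (\<Sum>xs\<in>L. \<Sum>k\<le>length xs. \<Sum>z\<in>Z. g (insert_at k z xs))"
    by (simp add: sum.cartesian_product)
  finally show ?thesis .
qed

lemma permutations_of_set_insert:
  assumes "z \<notin> A"
  shows "permutations_of_set (insert z A)
           = (\<lambda>(xs, k, y). insert_at k y xs) ` (SIGMA xs:permutations_of_set A. {..length xs} \<times> {z})"
proof (intro equalityI subsetI)
  fix ys assume ys: "ys \<in> permutations_of_set (insert z A)"
  then obtain xs k where "k \<le> length xs" "ys = insert_at k z xs"
    using in_set_imp_insert_at[of z ys] by (auto simp: permutations_of_set_def)
  moreover have "xs \<in> permutations_of_set A"
    using ys assms calculation(2) by (auto simp: permutations_of_set_def)
  ultimately show "ys \<in> (\<lambda>(xs, k, y). insert_at k y xs) `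
      (SIGMA xs:permutations_of_set A. {..length xs} \<times> {z})"
    by force
qed (use assms in \<open>auto simp: permutations_of_set_def\<close>)

lemma sum_permutations_of_set_insert:
  assumes "finite A" "z \<notin> A"
  shows "(\<Sum>ys\<in>permutations_of_set (insert z A). g ys)
           = (\<Sum>xs\<in>permutations_of_set A. \<Sum>k\<le>card A. g (insert_at k z xs))"
proof -
  have "(\<Sum>ys\<in>permutations_of_set (insert z A). g ys)
      = (\<Sum>xs\<in>permutations_of_set A. \<Sum>k\<le>length xs. \<Sum>y\<in>{z}. g (insert_at k y xs))"
    unfolding permutations_of_set_insert[OF assms(2)]
    by (rule sum_image_insert_at) (use assms(2) in \<open>auto dest: permutations_of_setD\<close>)
  also have "\<dots> = (\<Sum>xs\<in>permutations_of_set A. \<Sum>k\<le>card A. g (insert_at k z xs))"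
    by (intro sum.cong refl) (simp_all add: length_finite_permutations_of_set)
  finally show ?thesis .
qed

(* For a set A of positive integers these are the signed permutations of A in one-line notation.
   With the convention w(0) = w(n+1) = 0, des w = descents (0 # xs) and ades w = descents (0 # xs @ [0]). *)
definition signed_permutations_of_set :: "int set \<Rightarrow> int list set" where
  "signed_permutations_of_set A = {xs. distinct (map abs xs) \<and> abs ` set xs = A}"

lemma signed_permutations_of_set_empty [simp]: "signed_permutations_of_set {} = {[]}"
proof (intro equalityI subsetI)
  fix xs assume "xs \<in> signed_permutations_of_set {}"
  then have "abs ` set xs = {}"
    by (simp add: signed_permutations_of_set_def)
  then show "xs \<in> {[]}"
    by simp
qed (simp add: signed_permutations_of_set_def)

lemma length_signed_permutations_of_set:
  "xs \<in> signed_permutations_of_set A \<Longrightarrow> length xs = card A"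
  unfolding signed_permutations_of_set_def using distinct_card[of "map abs xs"] by simp

lemma finite_signed_permutations_of_set:
  assumes "finite A"
  shows "finite (signed_permutations_of_set A)"
proof (rule finite_subset)
  show "signed_permutations_of_set A \<subseteq> {xs. set xs \<subseteq> A \<union> uminus ` A \<and> distinct xs}"
  proof
    fix xs assume "xs \<in> signed_permutations_of_set A"
    then have xs: "distinct (map abs xs)" "abs ` set xs = A"
      by (simp_all add: signed_permutations_of_set_def)
    then have "distinct xs"
      by (simp add: distinct_map)
    moreover have "set xs \<subseteq> A \<union> uminus ` A"
    proof
      fix y assume "y \<in> set xs"
      then have "\<bar>y\<bar> \<in> A"
        using xs(2) by blast
      then show "y \<in> A \<union> uminus ` A"
      proof (cases "0 \<le> y")
        case False
        with \<open>\<bar>y\<bar> \<in> A\<close> have "-y \<in> A"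
          by simp
        then show ?thesis
          by (intro UnI2 image_eqI[of _ _ "-y"]) simp_all
      qed simp
    qed
    ultimately show "xs \<in> {xs. set xs \<subseteq> A \<union> uminus ` A \<and> distinct xs}"
      by simp
  qed
  show "finite {xs. set xs \<subseteq> A \<union> uminus ` A \<and> distinct xs}"
    using assms by (intro finite_subset_distinct) simp
qed

lemma signed_permutations_of_set_insert:
  assumes "0 \<le> z" "z \<notin> A"
  shows "signed_permutations_of_set (insert z A)
           = (\<lambda>(xs, k, y). insert_at k y xs) `
               (SIGMA xs:signed_permutations_of_set A. {..length xs} \<times> {z, -z})"
proof (intro equalityI subsetI)
  fix ys assume ys: "ys \<in> signed_permutations_of_set (insert z A)"
  then have ys': "distinct (map abs ys)" "abs ` set ys = insert z A"
    by (simp_all add: signed_permutations_of_set_def)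
  then obtain y where y: "y \<in> set ys" "\<bar>y\<bar> = z"
    by (metis imageE insertI1)
  then obtain xs k where xs: "k \<le> length xs" "ys = insert_at k y xs"
    using in_set_imp_insert_at[OF y(1)] by blast
  have "\<bar>y\<bar> \<notin> abs ` set xs" "distinct (map abs xs)" "insert z (abs ` set xs) = insert z A"
    using ys' xs(2) y(2) by (simp_all add: map_insert_at)
  then have "xs \<in> signed_permutations_of_set A"
    using assms(2) y(2) by (simp add: signed_permutations_of_set_def insert_ident)
  moreover have "y \<in> {z, -z}"
    using y(2) by auto
  ultimately show "ys \<in> (\<lambda>(xs, k, y). insert_at k y xs) `
      (SIGMA xs:signed_permutations_of_set A. {..length xs} \<times> {z, -z})"
    using xs by (intro image_eqI[of _ _ "(xs, k, y)"]) simp_all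
next
  fix ys assume "ys \<in> (\<lambda>(xs, k, y). insert_at k y xs) `
      (SIGMA xs:signed_permutations_of_set A. {..length xs} \<times> {z, -z})"
  then obtain xs k y where ys: "ys = insert_at k y xs"
    and xs: "xs \<in> signed_permutations_of_set A" and y: "y \<in> {z, -z}"
    by (elim imageE) auto
  have "\<bar>y\<bar> = z"
    using y assms(1) by auto
  then show "ys \<in> signed_permutations_of_set (insert z A)"
    using xs assms(2) by (simp add: signed_permutations_of_set_def ys map_insert_at)
qed

lemma sum_signed_permutations_of_set_insert:
  assumes "finite A" "0 < z" "z \<notin> A"
  shows "(\<Sum>ys\<in>signed_permutations_of_set (insert z A). g ys)
           = (\<Sum>xs\<in>signed_permutations_of_set A.
                \<Sum>k\<le>card A. g (insert_at k z xs) + g (insert_at k (-z) xs))"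
proof -
  have disjoint: "set xs \<inter> {z, -z} = {}" if "xs \<in> signed_permutations_of_set A" for xs
  proof (rule ccontr)
    assume "set xs \<inter> {z, -z} \<noteq> {}"
    then obtain y where "y \<in> set xs" "\<bar>y\<bar> = z"
      using assms(2) by auto
    then have "z \<in> abs ` set xs"
      by (metis image_eqI)
    with that assms(3) show False
      by (simp add: signed_permutations_of_set_def)
  qed
  have "(\<Sum>ys\<in>signed_permutations_of_set (insert z A). g ys)
      = (\<Sum>xs\<in>signed_permutations_of_set A. \<Sum>k\<le>length xs. \<Sum>y\<in>{z, -z}. g (insert_at k y xs))"
    unfolding signed_permutations_of_set_insert[OF less_imp_le[OF assms(2)] assms(3)]
    by (rule sum_image_insert_at[OF finite_signed_permutations_of_set[OF assms(1)] _ disjoint]) simp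
  also have "\<dots> = (\<Sum>xs\<in>signed_permutations_of_set A.
                \<Sum>k\<le>card A. g (insert_at k z xs) + g (insert_at k (-z) xs))"
  proof (intro sum.cong refl)
    fix xs k
    have "z \<noteq> -z"
      using assms(2) by simp
    then show "(\<Sum>y\<in>{z, -z}. g (insert_at k y xs)) = g (insert_at k z xs) + g (insert_at k (-z) xs)"
      by simp
  qed (simp add: length_signed_permutations_of_set)
  finally show ?thesis .
qed

section \<open>Worpitzky identities\<close>

(* The coefficient of t^m in t^d / (1 - t)^(n+1). *)
definition worpitzky_weight :: "nat \<Rightarrow> nat \<Rightarrow> nat \<Rightarrow> nat" where
  "worpitzky_weight n m d = (if d \<le> m then (m - d + n) choose n else 0)"

(* Inserting a new extreme letter into a word with d descents yields a words with d descents
   and b words with d + 1 descents; this recurrence collapses the resulting weighted sum. *)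
lemma worpitzky_weight_step:
  assumes "a + b = s * Suc n" "c + s * d = s * m + a"
  shows "a * worpitzky_weight (Suc n) m d + b * worpitzky_weight (Suc n) m (Suc d)
           = c * worpitzky_weight n m d"
proof (cases "d \<le> m")
  case False
  then show ?thesis
    by (simp add: worpitzky_weight_def)
next
  case True
  define K where "K = m - d + n"
  have W0: "worpitzky_weight (Suc n) m d = (K choose n) + (K choose Suc n)"
    using True by (simp add: worpitzky_weight_def K_def)
  have W1: "worpitzky_weight (Suc n) m (Suc d) = K choose Suc n"
    using True by (cases "d = m") (simp_all add: worpitzky_weight_def K_def Suc_diff_Suc)
  have absorb: "Suc n * (K choose Suc n) = (m - d) * (K choose n)"
    using binomial_absorption[of n K] binomial_absorb_comp[of K n] by (simp add: K_def)
  have c: "c = s * (m - d) + a"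
    using assms(2) True mult_le_mono2[of d m s] by (simp add: diff_mult_distrib2)
  have "a * worpitzky_weight (Suc n) m d + b * worpitzky_weight (Suc n) m (Suc d)
      = a * (K choose n) + (a + b) * (K choose Suc n)"
    by (simp add: W0 W1 algebra_simps)
  also have "\<dots> = a * (K choose n) + s * (Suc n * (K choose Suc n))"
    by (simp only: assms(1) mult.assoc)
  also have "\<dots> = c * (K choose n)"
    by (simp only: absorb c) (simp add: distrib_right mult.assoc add.commute)
  finally show ?thesis
    using True by (simp add: worpitzky_weight_def K_def)
qed

lemma sum_worpitzky_weight_descents:
  fixes A :: "'a::linorder set"
  assumes "finite A"
  shows "(\<Sum>xs\<in>permutations_of_set A. worpitzky_weight (card A) m (descents xs)) = (m + 1) ^ card A"
  using assms
proof (induction A rule: finite_linorder_max_induct)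
  case empty
  then show ?case
    by (simp add: worpitzky_weight_def)
next
  case (insert b A)
  let ?W = "worpitzky_weight (Suc (card A)) m"
  have inner: "(\<Sum>k\<le>card A. ?W (descents (insert_at k b xs)))
      = (m + 1) * worpitzky_weight (card A) m (descents xs)"
    if "xs \<in> permutations_of_set A" for xs
  proof -
    have xs: "length xs = card A" "\<forall>y\<in>set xs. y < b"
      using that insert.hyps(2) by (auto simp: length_finite_permutations_of_set dest: permutations_of_setD)
    let ?d = "descents xs"
    have "?d \<le> card A"
      using descents_le_length[of xs] xs(1) by simp
    have "(\<Sum>k\<le>card A. ?W (descents (insert_at k b xs))) = Suc ?d * ?W ?d + (card A - ?d) * ?W (Suc ?d)"
      using sum_descents_insert_at_max[of xs b ?W] xs by simp
    also have "\<dots> = (m + 1) * worpitzky_weight (card A) m ?d"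
      by (rule worpitzky_weight_step[where s = 1]) (use \<open>?d \<le> card A\<close> in simp_all)
    finally show ?thesis .
  qed
  have "b \<notin> A"
    using insert.hyps(2) by auto
  then have "(\<Sum>ys\<in>permutations_of_set (insert b A). ?W (descents ys))
      = (m + 1) * (\<Sum>xs\<in>permutations_of_set A. worpitzky_weight (card A) m (descents xs))"
    using insert.hyps(1) by (simp add: sum_permutations_of_set_insert inner sum_distrib_left)
  then show ?case
    using insert \<open>b \<notin> A\<close> by simp
qed

lemma signed_permutations_of_set_abs_less:
  assumes "xs \<in> signed_permutations_of_set A" "\<forall>a\<in>A. a < b"
  shows "\<forall>y\<in>set xs. \<bar>y\<bar> < \<bar>b\<bar>"
  using assms by (force simp: signed_permutations_of_set_def)

lemma sum_worpitzky_weight_insert_signed: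
  assumes "xs \<in> signed_permutations_of_set A" "\<forall>a\<in>A. a < b" "0 < b"
  shows "(\<Sum>k\<le>card A. worpitzky_weight (Suc (card A)) m (descents (0 # insert_at k b xs))
                       + worpitzky_weight (Suc (card A)) m (descents (0 # insert_at k (-b) xs)))
           = (2 * m + 1) * worpitzky_weight (card A) m (descents (0 # xs))"
    (is "?lhs = _")
proof -
  let ?n = "card A" and ?W = "worpitzky_weight (Suc (card A)) m" and ?d = "descents (0 # xs)"
  have "length xs = ?n"
    using assms(1) by (rule length_signed_permutations_of_set)
  moreover have "\<forall>y\<in>set xs. \<bar>y\<bar> < \<bar>b\<bar>" "\<forall>y\<in>set xs. \<bar>y\<bar> < \<bar>-b\<bar>"
    using signed_permutations_of_set_abs_less[OF assms(1,2)] by simp_all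
  ultimately have "?lhs = (?d * ?W ?d + (?n - ?d) * ?W (Suc ?d) + ?W ?d)
                          + (?d * ?W ?d + (?n - ?d) * ?W (Suc ?d) + ?W (Suc ?d))"
    using sum_descents_insert_at_signed[of b xs ?W] sum_descents_insert_at_signed[of "-b" xs ?W] assms(3)
    by (simp add: sum.distrib)
  also have "\<dots> = (2 * ?d + 1) * ?W ?d + (2 * (?n - ?d) + 1) * ?W (Suc ?d)"
    by (simp add: algebra_simps)
  also have "\<dots> = (2 * m + 1) * worpitzky_weight ?n m ?d"
    using descents_le_length[of "0 # xs"] \<open>length xs = ?n\<close>
    by (intro worpitzky_weight_step[where s = 2]) simp_all
  finally show ?thesis .
qed

lemma sum_worpitzky_weight_signed_descents:
  assumes "finite A" "\<forall>a\<in>A. 0 < a"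
  shows "(\<Sum>xs\<in>signed_permutations_of_set A. worpitzky_weight (card A) m (descents (0 # xs)))
           = (2 * m + 1) ^ card A"
  using assms
proof (induction A rule: finite_linorder_max_induct)
  case empty
  then show ?case
    by (simp add: worpitzky_weight_def)
next
  case (insert b A)
  let ?n = "card A" and ?W = "worpitzky_weight (Suc (card A)) m"
  have b: "0 < b" "b \<notin> A"
    using insert by auto
  have IH: "(\<Sum>xs\<in>signed_permutations_of_set A. worpitzky_weight ?n m (descents (0 # xs))) = (2 * m + 1) ^ ?n"
    using insert.IH insert.prems by simp
  have "(\<Sum>ys\<in>signed_permutations_of_set (insert b A). ?W (descents (0 # ys)))
      = (\<Sum>xs\<in>signed_permutations_of_set A.
           \<Sum>k\<le>?n. ?W (descents (0 # insert_at k b xs)) + ?W (descents (0 # insert_at k (-b) xs)))"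
    by (rule sum_signed_permutations_of_set_insert[OF insert.hyps(1) b])
  also have "\<dots> = (\<Sum>xs\<in>signed_permutations_of_set A. (2 * m + 1) * worpitzky_weight ?n m (descents (0 # xs)))"
    by (rule sum.cong[OF refl sum_worpitzky_weight_insert_signed[OF _ insert.hyps(2) b(1)]])
  also have "\<dots> = (2 * m + 1) ^ Suc ?n"
    by (simp only: sum_distrib_left[symmetric] IH power_Suc)
  finally show ?case
    using insert.hyps(1) b(2) by simp
qed

lemma sum_worpitzky_weight_insert_signed_bracket:
  assumes "xs \<in> signed_permutations_of_set A" "\<forall>a\<in>A. a < b" "0 < b"
  shows "(\<Sum>k\<le>card A. worpitzky_weight (Suc (card A)) m (descents (0 # insert_at k b xs @ [0]))
                       + worpitzky_weight (Suc (card A)) m (descents (0 # insert_at k (-b) xs @ [0])))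
           = (2 * m) * worpitzky_weight (card A) m (descents (0 # xs @ [0]))"
    (is "?lhs = _")
proof -
  let ?n = "card A" and ?W = "worpitzky_weight (Suc (card A)) m" and ?d = "descents (0 # xs @ [0])"
  have "length xs = ?n"
    using assms(1) by (rule length_signed_permutations_of_set)
  moreover have "\<forall>y\<in>set xs. \<bar>y\<bar> < \<bar>b\<bar>" "\<forall>y\<in>set xs. \<bar>y\<bar> < \<bar>-b\<bar>"
    using signed_permutations_of_set_abs_less[OF assms(1,2)] by simp_all
  ultimately have "?lhs = (?d * ?W ?d + (Suc ?n - ?d) * ?W (Suc ?d)) + (?d * ?W ?d + (Suc ?n - ?d) * ?W (Suc ?d))"
    using sum_descents_insert_at_signed_bracket[of b xs ?W]
      sum_descents_insert_at_signed_bracket[of "-b" xs ?W] assms(3)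
    by (simp add: sum.distrib)
  also have "\<dots> = (2 * ?d) * ?W ?d + (2 * (Suc ?n - ?d)) * ?W (Suc ?d)"
    by (simp add: algebra_simps)
  also have "\<dots> = (2 * m) * worpitzky_weight ?n m ?d"
    using descents_le_length[of "0 # xs @ [0]"] \<open>length xs = ?n\<close>
    by (intro worpitzky_weight_step[where s = 2]) simp_all
  finally show ?thesis .
qed

lemma sum_worpitzky_weight_signed_descents_bracket:
  assumes "finite A" "\<forall>a\<in>A. 0 < a"
  shows "(\<Sum>xs\<in>signed_permutations_of_set A. worpitzky_weight (card A) m (descents (0 # xs @ [0])))
           = (2 * m) ^ card A"
  using assms
proof (induction A rule: finite_linorder_max_induct)
  case empty
  then show ?case
    by (simp add: worpitzky_weight_def)
next
  case (insert b A)
  let ?n = "card A" and ?W = "worpitzky_weight (Suc (card A)) m"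
  have b: "0 < b" "b \<notin> A"
    using insert by auto
  have IH: "(\<Sum>xs\<in>signed_permutations_of_set A. worpitzky_weight ?n m (descents (0 # xs @ [0]))) = (2 * m) ^ ?n"
    using insert.IH insert.prems by simp
  have "(\<Sum>ys\<in>signed_permutations_of_set (insert b A). ?W (descents (0 # ys @ [0])))
      = (\<Sum>xs\<in>signed_permutations_of_set A.
           \<Sum>k\<le>?n. ?W (descents (0 # insert_at k b xs @ [0])) + ?W (descents (0 # insert_at k (-b) xs @ [0])))"
    by (rule sum_signed_permutations_of_set_insert[OF insert.hyps(1) b])
  also have "\<dots> = (\<Sum>xs\<in>signed_permutations_of_set A. (2 * m) * worpitzky_weight ?n m (descents (0 # xs @ [0])))"
    by (rule sum.cong[OF refl sum_worpitzky_weight_insert_signed_bracket[OF _ insert.hyps(2) b(1)]])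
  also have "\<dots> = (2 * m) ^ Suc ?n"
    by (simp only: sum_distrib_left[symmetric] IH power_Suc)
  finally show ?case
    using insert.hyps(1) b(2) by simp
qed

section \<open>Permutations as words\<close>

lemma bij_betw_map_permutes:
  assumes "distinct xs"
  shows "bij_betw (\<lambda>p. map p xs) {p. p permutes set xs} (permutations_of_set (set xs))"
proof -
  have inj: "inj_on (\<lambda>p. map p xs) {p. p permutes set xs}"
  proof (rule inj_onI, rule ext)
    fix p q x
    assume "p \<in> {p. p permutes set xs}" "q \<in> {p. p permutes set xs}" "map p xs = map q xs"
    then show "p x = q x"
      by (cases "x \<in> set xs") (simp_all add: map_eq_conv permutes_not_in)
  qed
  have sub: "(\<lambda>p. map p xs) ` {p. p permutes set xs} \<subseteq> permutations_of_set (set xs)"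
    using assms by (auto simp: permutations_of_set_def permutes_image distinct_map permutes_inj_on)
  have "card ((\<lambda>p. map p xs) ` {p. p permutes set xs}) = card (permutations_of_set (set xs))"
    by (simp add: card_image[OF inj] card_permutations)
  then show ?thesis
    using inj sub by (simp add: bij_betw_def card_subset_eq)
qed

lemma des_eq_descents: "des n p = descents (map p [1..<Suc n])"
proof -
  let ?D = "{i. i < n - 1 \<and> p (Suc (Suc i)) < p (Suc i)}"
  have "{i \<in> {1..n - 1}. p (Suc i) < p i} = Suc ` ?D"
  proof (intro equalityI subsetI)
    fix i assume "i \<in> {i \<in> {1..n - 1}. p (Suc i) < p i}"
    then show "i \<in> Suc ` ?D"
      by (cases i) auto
  qed auto
  then have "des n p = card ?D"
    by (simp add: des_def card_image)
  also have "?D = {i. i < length (map p [1..<Suc n]) - 1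
                   \<and> map p [1..<Suc n] ! Suc i < map p [1..<Suc n] ! i}"
    by (auto simp del: upt_Suc)
  finally show ?thesis
    by (simp only: descents_eq_card)
qed

lemma eulerA_eq_sum_descents: "eulerA n x = (\<Sum>xs\<in>permutations_of_set {1..n}. x ^ descents xs)"
proof -
  have "bij_betw (\<lambda>p. map p [1..<Suc n]) {p. p permutes {1..n}} (permutations_of_set {1..n})"
    using bij_betw_map_permutes[of "[1..<Suc n]"]
    by (simp del: upt_Suc add: atLeastLessThanSuc_atLeastAtMost)
  then show ?thesis
    unfolding eulerA_def des_eq_descents by (rule sum.reindex_bij_betw)
qed

definition one_line :: "nat \<Rightarrow> (int \<Rightarrow> int) \<Rightarrow> int list" where
  "one_line n w = map (\<lambda>i. w (int i)) [1..<Suc n]"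

lemma length_one_line [simp]: "length (one_line n w) = n"
  by (simp add: one_line_def)

lemma nth_one_line: "i < n \<Longrightarrow> one_line n w ! i = w (int (Suc i))"
  by (simp add: one_line_def del: upt_Suc)

lemma sval_eq_nth_bracketed_one_line:
  assumes "i \<le> Suc n"
  shows "sval n w i = (0 # one_line n w @ [0]) ! i"
proof (cases i)
  case (Suc j)
  then show ?thesis
    using assms by (cases "j < n") (simp_all add: sval_def nth_append nth_one_line)
qed (simp add: sval_def)

lemma sval_eq_nth_zero_one_line:
  assumes "i \<le> n"
  shows "sval n w i = (0 # one_line n w) ! i"
  using sval_eq_nth_bracketed_one_line[of i n w] assms by (cases i) (simp_all add: nth_append)

lemma sdes_eq_descents: "sdes n w = descents (0 # one_line n w)"
proof -
  have "{i \<in> {0..n - 1}. sval n w (Suc i) < sval n w i}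
      = {i. i < length (0 # one_line n w) - 1 \<and> (0 # one_line n w) ! Suc i < (0 # one_line n w) ! i}"
  proof (intro Collect_cong)
    fix i
    show "(i \<in> {0..n - 1} \<and> sval n w (Suc i) < sval n w i)
      \<longleftrightarrow> (i < length (0 # one_line n w) - 1 \<and> (0 # one_line n w) ! Suc i < (0 # one_line n w) ! i)"
    proof (cases "i < n")
      case True
      then have "i \<le> n - 1"
        by simp
      with True show ?thesis
        by (simp add: sval_eq_nth_zero_one_line)
    next
      case False
      then show ?thesis
        by (auto simp: sval_def)
    qed
  qed
  then show ?thesis
    by (simp add: sdes_def descents_eq_card)
qed

lemma sades_eq_descents: "sades n w = descents (0 # one_line n w @ [0])"
proof -
  have "{i \<in> {0..n}. sval n w (Suc i) < sval n w i}
      = {i. i < length (0 # one_line n w @ [0]) - 1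
            \<and> (0 # one_line n w @ [0]) ! Suc i < (0 # one_line n w @ [0]) ! i}"
    by (intro Collect_cong) (auto simp: sval_eq_nth_bracketed_one_line)
  then show ?thesis
    by (simp add: sades_def descents_eq_card)
qed

lemma signed_perms_eqI:
  assumes "w \<in> signed_perms n" "w' \<in> signed_perms n" "one_line n w = one_line n w'"
  shows "w = w'"
proof (rule ext)
  fix i :: int
  let ?S = "{-int n..int n} - {0}"
  have w: "w permutes ?S" "w' permutes ?S" "\<And>i. w (-i) = - w i" "\<And>i. w' (-i) = - w' i"
    using assms(1,2) by (simp_all add: signed_perms_def)
  have pos: "w (int k) = w' (int k)" if "1 \<le> k" "k \<le> n" for k
  proof -
    have "one_line n w ! (k - 1) = one_line n w' ! (k - 1)"
      using assms(3) by simp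
    then show ?thesis
      using that by (simp add: nth_one_line)
  qed
  show "w i = w' i"
  proof (cases "i \<in> ?S")
    case False
    then show ?thesis
      using w(1,2) by (simp add: permutes_not_in)
  next
    case True
    show ?thesis
    proof (cases "0 < i")
      case True
      then show ?thesis
        using pos[of "nat i"] \<open>i \<in> ?S\<close> by simp
    next
      case False
      with \<open>i \<in> ?S\<close> have "1 \<le> nat (-i)" "nat (-i) \<le> n"
        by auto
      with False have "w (-i) = w' (-i)"
        using pos[of "nat (-i)"] by simp
      then show ?thesis
        by (metis w(3,4) minus_minus neg_equal_iff_equal)
    qed
  qed
qed

lemma set_one_line: "set (one_line n w) = (\<lambda>k. w (int k)) ` {1..n}"
  by (simp add: one_line_def atLeastLessThanSuc_atLeastAtMost del: upt_Suc)

lemma abs_image_set_one_line: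
  assumes "w \<in> signed_perms n"
  shows "abs ` set (one_line n w) = {1..int n}"
proof -
  let ?S = "{-int n..int n} - {0}"
  have w: "w permutes ?S" "\<And>i. w (-i) = - w i"
    using assms by (simp_all add: signed_perms_def)
  show ?thesis
  proof
    show "abs ` set (one_line n w) \<subseteq> {1..int n}"
    proof
      fix a assume "a \<in> abs ` set (one_line n w)"
      then obtain k where k: "k \<in> {1..n}" "a = \<bar>w (int k)\<bar>"
        by (auto simp: set_one_line)
      then have "w (int k) \<in> ?S"
        using permutes_in_image[OF w(1), of "int k"] by simp
      then show "a \<in> {1..int n}"
        using k(2) by auto
    qed
    show "{1..int n} \<subseteq> abs ` set (one_line n w)"
    proof
      fix a assume a: "a \<in> {1..int n}"
      then have "a \<in> w ` ?S"
        using permutes_image[OF w(1)] by auto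
      then obtain j where j: "j \<in> ?S" "w j = a"
        by blast
      show "a \<in> abs ` set (one_line n w)"
      proof (cases "0 < j")
        case True
        then have "nat j \<in> {1..n}" "w (int (nat j)) = a"
          using j by auto
        then show ?thesis
          using a by (force simp: set_one_line)
      next
        case False
        then have "nat (-j) \<in> {1..n}" "w (int (nat (-j))) = -a"
          using j w(2)[of j] by auto
        then show ?thesis
          using a by (force simp: set_one_line)
      qed
    qed
  qed
qed

lemma one_line_in_signed_permutations_of_set:
  assumes "w \<in> signed_perms n"
  shows "one_line n w \<in> signed_permutations_of_set {1..int n}"
proof -
  have "distinct (map abs (one_line n w))"
    by (rule card_distinct) (simp add: abs_image_set_one_line[OF assms])
  then show ?thesis
    using abs_image_set_one_line[OF assms] by (simp add: signed_permutations_of_set_def)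
qed

definition odd_extension :: "int list \<Rightarrow> int \<Rightarrow> int" where
  "odd_extension xs i =
     (if i \<noteq> 0 \<and> \<bar>i\<bar> \<le> int (length xs) then sgn i * xs ! nat (\<bar>i\<bar> - 1) else i)"

lemma odd_extension_uminus: "odd_extension xs (-i) = - odd_extension xs i"
  by (simp add: odd_extension_def)

lemma one_line_odd_extension: "one_line (length xs) (odd_extension xs) = xs"
  by (rule nth_equalityI) (simp_all add: nth_one_line odd_extension_def)

lemma odd_extension_permutes:
  assumes xs: "xs \<in> signed_permutations_of_set {1..int n}"
  shows "odd_extension xs permutes ({-int n..int n} - {0})"
proof -
  let ?S = "{-int n..int n} - {0}" and ?w = "odd_extension xs"
  have distinct: "distinct (map abs xs)" and abs_set: "abs ` set xs = {1..int n}"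
    and length: "length xs = n"
    using xs length_signed_permutations_of_set[OF xs] by (simp_all add: signed_permutations_of_set_def)
  have S_iff: "i \<in> ?S \<longleftrightarrow> i \<noteq> 0 \<and> \<bar>i\<bar> \<le> int n" for i
    by auto
  have idx: "nat (\<bar>i\<bar> - 1) < n" if "i \<in> ?S" for i
    using that unfolding S_iff by (simp add: nat_less_iff)
  have abs_nth: "\<bar>xs ! k\<bar> \<in> {1..int n}" if "k < n" for k
    using abs_set length that nth_mem[of k xs] by blast
  have w: "?w i = sgn i * xs ! nat (\<bar>i\<bar> - 1)" if "i \<in> ?S" for i
    using that length unfolding S_iff by (simp add: odd_extension_def)
  have abs_w: "\<bar>?w i\<bar> = \<bar>xs ! nat (\<bar>i\<bar> - 1)\<bar>" if "i \<in> ?S" for i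
    using that by (simp add: w[OF that] abs_mult abs_sgn_eq)
  have w_in: "?w i \<in> ?S" if "i \<in> ?S" for i
    using abs_w[OF that] abs_nth[OF idx[OF that]] unfolding S_iff by auto
  have inj: "inj_on ?w ?S"
  proof (rule inj_onI)
    fix i j assume i: "i \<in> ?S" and j: "j \<in> ?S" and eq: "?w i = ?w j"
    have ij: "nat (\<bar>i\<bar> - 1) < length xs" "nat (\<bar>j\<bar> - 1) < length xs"
      using idx[OF i] idx[OF j] length by simp_all
    have "map abs xs ! nat (\<bar>i\<bar> - 1) = map abs xs ! nat (\<bar>j\<bar> - 1)"
      using abs_w[OF i] abs_w[OF j] eq ij by simp
    then have "nat (\<bar>i\<bar> - 1) = nat (\<bar>j\<bar> - 1)"
      using nth_eq_iff_index_eq[OF distinct] ij by simp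
    then have "\<bar>i\<bar> - 1 = \<bar>j\<bar> - 1"
      using i j eq_nat_nat_iff[of "\<bar>i\<bar> - 1" "\<bar>j\<bar> - 1"] unfolding S_iff by simp
    then have abs_ij: "\<bar>i\<bar> = \<bar>j\<bar>"
      by simp
    moreover have "xs ! nat (\<bar>i\<bar> - 1) \<noteq> 0"
      using abs_nth[OF idx[OF i]] by auto
    ultimately have "sgn i = sgn j"
      using eq unfolding w[OF i] w[OF j] by simp
    with abs_ij show "i = j"
      by (metis mult_sgn_abs)
  qed
  have "?w ` ?S = ?S"
    using w_in inj by (intro endo_inj_surj) auto
  then have "bij_betw ?w ?S ?S"
    using inj by (simp add: bij_betw_def)
  moreover have "?w i = i" if "i \<notin> ?S" for i
    using that length unfolding S_iff by (auto simp: odd_extension_def)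
  ultimately show ?thesis
    by (rule bij_imp_permutes)
qed

lemma signed_perm_from_one_line:
  assumes "xs \<in> signed_permutations_of_set {1..int n}"
  obtains w where "w \<in> signed_perms n" "one_line n w = xs"
proof
  show "odd_extension xs \<in> signed_perms n"
    using odd_extension_permutes[OF assms] by (simp add: signed_perms_def odd_extension_uminus)
  show "one_line n (odd_extension xs) = xs"
    using one_line_odd_extension[of xs] length_signed_permutations_of_set[OF assms] by simp
qed

lemma bij_betw_one_line_signed_perms:
  "bij_betw (one_line n) (signed_perms n) (signed_permutations_of_set {1..int n})"
proof (rule bij_betw_imageI)
  show "inj_on (one_line n) (signed_perms n)"
    by (rule inj_onI) (rule signed_perms_eqI)
  show "one_line n ` signed_perms n = signed_permutations_of_set {1..int n}"
  proof
    show "one_line n ` signed_perms n \<subseteq> signed_permutations_of_set {1..int n}"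
      using one_line_in_signed_permutations_of_set by blast
    show "signed_permutations_of_set {1..int n} \<subseteq> one_line n ` signed_perms n"
    proof
      fix xs assume "xs \<in> signed_permutations_of_set {1..int n}"
      then obtain w where "w \<in> signed_perms n" "one_line n w = xs"
        by (rule signed_perm_from_one_line)
      then show "xs \<in> one_line n ` signed_perms n"
        by blast
    qed
  qed
qed

lemma typeC_eq_sum_descents:
  "typeC n y = (\<Sum>xs\<in>signed_permutations_of_set {1..int n}. y ^ descents (0 # xs))"
  unfolding typeC_def sdes_eq_descents
  by (rule sum.reindex_bij_betw[OF bij_betw_one_line_signed_perms])

lemma typeCt_eq_sum_descents:
  "typeCt n y = (\<Sum>xs\<in>signed_permutations_of_set {1..int n}. y ^ descents (0 # xs @ [0]))"
  unfolding typeCt_def sades_eq_descents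
  by (rule sum.reindex_bij_betw[OF bij_betw_one_line_signed_perms])

section \<open>Generating functions\<close>

unbundle fps_syntax

lemma fps_nth_X_power_mult_inverse:
  "(fps_X ^ d * inverse ((1 - fps_X) ^ Suc n) :: 'a::field_char_0 fps) $ m
     = of_nat (worpitzky_weight n m d)"
proof -
  have "inverse ((1 - fps_X) ^ Suc n :: 'a fps) = Abs_fps (\<lambda>k. of_nat ((k + n) choose n))"
  proof -
    have "(k + n choose k) = (k + n choose n)" for k
      using binomial_symmetric[of n "k + n"] by simp
    then show ?thesis
      using one_minus_const_fps_X_neg_power'[of "Suc n" "1 :: 'a"] by (simp add: add.commute)
  qed
  then show ?thesis
    by (simp add: fps_X_power_mult_nth worpitzky_weight_def not_less)
qed

definition generating_poly :: "'b set \<Rightarrow> ('b \<Rightarrow> nat) \<Rightarrow> 'a::comm_ring_1 poly" where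
  "generating_poly L d = (\<Sum>l\<in>L. monom 1 (d l))"

lemma poly_generating_poly: "poly (generating_poly L d) x = (\<Sum>l\<in>L. x ^ d l)"
  by (simp add: generating_poly_def poly_sum poly_monom)

lemma fps_of_generating_poly:
  assumes "finite L" "\<And>m. (\<Sum>l\<in>L. worpitzky_weight n m (d l)) = f m"
  shows "fps_of_poly (generating_poly L d :: 'a::field_char_0 poly)
           = Abs_fps (\<lambda>m. of_nat (f m)) * (1 - fps_X) ^ Suc n"
proof -
  let ?G = "inverse ((1 - fps_X) ^ Suc n) :: 'a fps"
  have prod: "fps_of_poly (generating_poly L d) * ?G = Abs_fps (\<lambda>m. of_nat (f m))"
  proof (rule fps_ext)
    fix m
    have "(fps_of_poly (generating_poly L d) * ?G) $ m = (\<Sum>l\<in>L. (fps_X ^ d l * ?G) $ m)"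
      by (simp add: generating_poly_def fps_of_poly_sum fps_of_poly_monom' sum_distrib_right fps_sum_nth)
    also have "\<dots> = (\<Sum>l\<in>L. of_nat (worpitzky_weight n m (d l)))"
      by (simp only: fps_nth_X_power_mult_inverse)
    also have "\<dots> = of_nat (f m)"
      by (simp flip: assms(2))
    finally show "(fps_of_poly (generating_poly L d) * ?G) $ m = Abs_fps (\<lambda>m. of_nat (f m)) $ m"
      by simp
  qed
  have inv: "?G * (1 - fps_X) ^ Suc n = 1"
    by (rule inverse_mult_eq_1) simp
  have "fps_of_poly (generating_poly L d) = fps_of_poly (generating_poly L d) * (?G * (1 - fps_X) ^ Suc n)"
    by (simp only: inv mult_1_right)
  also have "\<dots> = Abs_fps (\<lambda>m. of_nat (f m)) * (1 - fps_X) ^ Suc n"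
    by (simp only: prod mult.assoc[symmetric])
  finally show ?thesis .
qed

lemma fps_compose_X_power_nth:
  assumes "0 < k"
  shows "(f oo fps_X ^ k) $ j = (if k dvd j then f $ (j div k) else (0 :: 'a::comm_ring_1))"
proof -
  have iff: "j = k * i \<longleftrightarrow> i = j div k \<and> k dvd j" for i
  proof
    assume "j = k * i"
    then show "i = j div k \<and> k dvd j"
      using assms by simp
  next
    assume "i = j div k \<and> k dvd j"
    then show "j = k * i"
      by simp
  qed
  have "(f oo fps_X ^ k) $ j = (\<Sum>i\<in>{0..j}. if i = j div k \<and> k dvd j then f $ i else 0)"
    unfolding fps_compose_nth power_mult[symmetric] fps_X_power_nth iff
    by (intro sum.cong refl) simp
  also have "\<dots> = (if k dvd j then f $ (j div k) else 0)"
    by (simp add: sum.delta' div_le_dividend)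
  finally show ?thesis .
qed

lemma fps_even_odd_split:
  "fps_X * (Abs_fps (\<lambda>m. f (2 * m + 1)) oo fps_X ^ 2) + (Abs_fps (\<lambda>m. f (2 * m)) oo fps_X ^ 2)
     = (Abs_fps f :: 'a::comm_ring_1 fps)"
proof (rule fps_ext)
  fix j
  show "(fps_X * (Abs_fps (\<lambda>m. f (2 * m + 1)) oo fps_X ^ 2) + (Abs_fps (\<lambda>m. f (2 * m)) oo fps_X ^ 2)) $ j
      = Abs_fps f $ j"
  proof (cases "even j")
    case True
    then obtain m where "j = 2 * m"
      by (rule evenE)
    then show ?thesis
      by (cases m) (simp_all add: fps_X_mult_nth fps_compose_X_power_nth)
  next
    case False
    then obtain m where "j = 2 * m + 1"
      by (rule oddE)
    then show ?thesis
      by (simp add: fps_X_mult_nth fps_compose_X_power_nth)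
  qed
qed

lemma fps_compose_X_square_mult_one_minus_X_power:
  "((f :: 'a::idom fps) * (1 - fps_X) ^ k) oo fps_X ^ 2 = (f oo fps_X ^ 2) * (1 - fps_X ^ 2) ^ k"
proof -
  have Q0: "(fps_X ^ 2 :: 'a fps) $ 0 = 0"
    by simp
  then have "(1 - fps_X) oo fps_X ^ 2 = 1 - (fps_X ^ 2 :: 'a fps)"
    by (simp add: fps_compose_sub_distrib fps_X_fps_compose_startby0)
  then show ?thesis
    by (simp only: fps_compose_mult_distrib[OF Q0] fps_compose_power[OF Q0, symmetric])
qed

lemma fps_square_bisection_identity:
  fixes a c e :: "'a::field_char_0 poly"
  assumes "n \<ge> 1"
    and a: "fps_of_poly a = Abs_fps (\<lambda>m. of_nat ((m + 1) ^ n)) * (1 - fps_X) ^ Suc n"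
    and c: "fps_of_poly c = Abs_fps (\<lambda>m. of_nat ((2 * m + 1) ^ n)) * (1 - fps_X) ^ Suc n"
    and e: "fps_of_poly e = Abs_fps (\<lambda>m. of_nat ((2 * m) ^ n)) * (1 - fps_X) ^ Suc n"
  shows "[:0, 1:] * pcompose c [:0, 0, 1:] + pcompose e [:0, 0, 1:] = [:0, 1:] * [:1, 1:] ^ Suc n * a"
proof -
  let ?Q = "fps_X ^ 2 :: 'a fps"
  let ?odd = "Abs_fps (\<lambda>m. of_nat ((2 * m + 1) ^ n)) :: 'a fps"
  let ?even = "Abs_fps (\<lambda>m. of_nat ((2 * m) ^ n)) :: 'a fps"
  have sq: "fps_of_poly [:0, 0, 1:] = ?Q"
    by (simp add: fps_of_poly_pCons power2_eq_square)
  have "fps_X * (?odd oo ?Q) + (?even oo ?Q) = Abs_fps (\<lambda>j. of_nat (j ^ n))"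
    using fps_even_odd_split[of "\<lambda>j. of_nat (j ^ n) :: 'a"] by simp
  also have "\<dots> = fps_X * Abs_fps (\<lambda>m. of_nat ((m + 1) ^ n))"
    using assms(1) by (intro fps_ext) (simp add: fps_X_mult_nth)
  finally have merge: "fps_X * (?odd oo ?Q) + (?even oo ?Q) = fps_X * Abs_fps (\<lambda>m. of_nat ((m + 1) ^ n))" .
  have one_plus_X: "fps_of_poly [:1, 1:] = 1 + (fps_X :: 'a fps)"
    using fps_of_poly_linear'[of "1 :: 'a"] by simp
  have "coeff [:0, 0, 1:] 0 = (0 :: 'a)"
    by simp
  then have "fps_of_poly ([:0, 1:] * pcompose c [:0, 0, 1:] + pcompose e [:0, 0, 1:])
      = fps_X * (fps_of_poly c oo ?Q) + (fps_of_poly e oo ?Q)"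
    by (simp only: fps_of_poly_add fps_of_poly_mult fps_of_poly_pcompose sq fps_of_poly_fps_X)
  also have "\<dots> = (fps_X * (?odd oo ?Q) + (?even oo ?Q)) * (1 - ?Q) ^ Suc n"
    by (simp only: c e fps_compose_X_square_mult_one_minus_X_power distrib_right mult.assoc)
  also have "\<dots> = fps_X * Abs_fps (\<lambda>m. of_nat ((m + 1) ^ n)) * (1 - ?Q) ^ Suc n"
    by (simp only: merge)
  also have "1 - ?Q = (1 + fps_X) * (1 - fps_X)"
    by (simp add: power2_eq_square algebra_simps)
  also have "(fps_X :: 'a fps) * Abs_fps (\<lambda>m. of_nat ((m + 1) ^ n)) * ((1 + fps_X) * (1 - fps_X)) ^ Suc n
      = fps_X * (1 + fps_X) ^ Suc n * (Abs_fps (\<lambda>m. of_nat ((m + 1) ^ n)) * (1 - fps_X) ^ Suc n)"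
    by (subst power_mult_distrib) (simp only: mult_ac)
  also have "\<dots> = fps_of_poly ([:0, 1:] * [:1, 1:] ^ Suc n * a)"
    by (simp only: fps_of_poly_mult fps_of_poly_power fps_of_poly_fps_X a one_plus_X)
  finally show ?thesis
    by (simp only: fps_of_poly_eq_iff)
qed

lemma descent_generating_polys_identity:
  assumes "n \<ge> 1"
  shows "[:0, 1:] * pcompose (generating_poly (signed_permutations_of_set {1..int n})
                               (\<lambda>xs. descents (0 # xs))) [:0, 0, 1:]
           + pcompose (generating_poly (signed_permutations_of_set {1..int n})
                         (\<lambda>xs. descents (0 # xs @ [0]))) [:0, 0, 1:]
         = [:0, 1:] * [:1, 1:] ^ Suc n
             * (generating_poly (permutations_of_set {1..n}) descents :: 'a::field_char_0 poly)"
proof (rule fps_square_bisection_identity[OF assms])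
  have positive: "finite {1..int n}" "\<forall>a\<in>{1..int n}. 0 < a"
    by auto
  show "fps_of_poly (generating_poly (permutations_of_set {1..n}) descents :: 'a poly)
      = Abs_fps (\<lambda>m. of_nat ((m + 1) ^ n)) * (1 - fps_X) ^ Suc n"
    by (rule fps_of_generating_poly) (use sum_worpitzky_weight_descents[of "{1..n}"] in simp_all)
  show "fps_of_poly (generating_poly (signed_permutations_of_set {1..int n}) (\<lambda>xs. descents (0 # xs)) :: 'a poly)
      = Abs_fps (\<lambda>m. of_nat ((2 * m + 1) ^ n)) * (1 - fps_X) ^ Suc n"
    by (rule fps_of_generating_poly)
      (use sum_worpitzky_weight_signed_descents[OF positive]
        in \<open>simp_all add: finite_signed_permutations_of_set\<close>)
  show "fps_of_poly (generating_poly (signed_permutations_of_set {1..int n})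
                       (\<lambda>xs. descents (0 # xs @ [0])) :: 'a poly)
      = Abs_fps (\<lambda>m. of_nat ((2 * m) ^ n)) * (1 - fps_X) ^ Suc n"
    by (rule fps_of_generating_poly)
      (use sum_worpitzky_weight_signed_descents_bracket[OF positive]
        in \<open>simp_all add: finite_signed_permutations_of_set\<close>)
qed

theorem mainTheorem3:
  fixes n :: nat and x :: real
  assumes "n \<ge> 1" and "x \<noteq> 0"
  shows "Tpoly n x = (1 + x) ^ (n + 1) * eulerA n x"
proof -
  have p001: "poly [:0, 0, 1:] x = x ^ 2" and p01: "poly [:0, 1:] x = x" and p11: "poly [:1, 1:] x = 1 + x"
    by (simp_all add: power2_eq_square)
  have "x * Tpoly n x = x * typeC n (x ^ 2) + typeCt n (x ^ 2)"
    using assms(2) by (simp add: Tpoly_def field_simps)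
  also have "\<dots> = poly ([:0, 1:] * pcompose (generating_poly (signed_permutations_of_set {1..int n})
                                                (\<lambda>xs. descents (0 # xs))) [:0, 0, 1:]
                         + pcompose (generating_poly (signed_permutations_of_set {1..int n})
                                       (\<lambda>xs. descents (0 # xs @ [0]))) [:0, 0, 1:]) x"
    by (simp only: poly_add poly_mult poly_pcompose p001 p01 poly_generating_poly
        typeC_eq_sum_descents typeCt_eq_sum_descents)
  also have "\<dots> = poly ([:0, 1:] * [:1, 1:] ^ Suc n * generating_poly (permutations_of_set {1..n}) descents) x"
    by (simp only: descent_generating_polys_identity[OF assms(1)])
  also have "\<dots> = x * ((1 + x) ^ (n + 1) * eulerA n x)"
    by (simp only: poly_mult poly_power p01 p11 poly_generating_poly eulerA_eq_sum_descents
        Suc_eq_plus1 mult.assoc)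
  finally show ?thesis
    using assms(2) by simp
qed

end
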